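(* There is $N$ such that for every $n\ge N$ the following holds. Let $R(x)=(2n-1)T_{2n+1}(x)+(2n+1)T_{2n-1}(x)$. For every positive root $\zeta$ of $U'_{2n-1}$ other than the smallest positive root, $R$ has a root in the interval $\left[\zeta-\frac{2}{5n^2\zeta},\ \zeta\right)$.
   Context: $T_m,U_m$ are Chebyshev polynomials of the first and second kind: $T_m(\cos\theta)=\cos m\theta$, $U_m(\cos\theta)=\sin((m+1)\theta)/\sin\theta$. *)

theory Defs
  imports "HOL-Computational_Algebra.Polynomial"
begin

fun cheb_T :: "nat \<Rightarrow> real poly" where
  "cheb_T 0 = 1"
| "cheb_T (Suc 0) = [:0, 1:]"
| "cheb_T (Suc (Suc m)) = [:0, 2:] * cheb_T (Suc m) - cheb_T m"

fun cheb_U :: "nat \<Rightarrow> real poly" where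
  "cheb_U 0 = 1"
| "cheb_U (Suc 0) = [:0, 2:]"
| "cheb_U (Suc (Suc m)) = [:0, 2:] * cheb_U (Suc m) - cheb_U m"

end

(* Under x = cos t the problem becomes trigonometric:
     sin^3 t * U'_{2n-1}(cos t) = cos t sin 2nt - 2n cos 2nt sin t,
     R(cos t) = 2 (2n cos 2nt cos t + sin 2nt sin t).
   The first function alternates in sign on the grid j pi/(2n), so the 2n-2 roots of U'_{2n-1}
   are the cos t_j with exactly one t_j in each cell (j pi/(2n), (j+1) pi/(2n)), 1 <= j <= 2n-2.
   A positive root other than the smallest one is therefore cos t0 with
   pi/(2n) < t0 < pi/2 - pi/(2n). Advancing t0 by an explicit step of size at most 2/(5n)
   makes R(cos t) change sign, and the estimates sin x <= x, 1 - cos x <= x^2/2 and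
   arctan x <= x <= tan x bound the resulting decrease of cos t by 2/(5 n^2 cos t0)
   once n >= 100. *)

theory Submission
  imports Defs "HOL-Analysis.Complex_Transcendental"
begin

lemma continuous_sign_change_root:
  fixes f :: "real \<Rightarrow> real"
  assumes "continuous_on {a..b} f" "a \<le> b" "f a * f b < 0"
  shows "\<exists>x. a < x \<and> x < b \<and> f x = 0"
proof -
  have "f a < 0 \<and> 0 < f b \<or> 0 < f a \<and> f b < 0"
    using assms(3) by (auto simp add: mult_less_0_iff)
  then obtain x where "a \<le> x" "x \<le> b" "f x = 0"
    using IVT'[of f a 0 b] IVT2'[of f b 0 a] assms(1,2) by force
  moreover have "x \<noteq> a" "x \<noteq> b" using assms(3) \<open>f x = 0\<close> by auto
  ultimately show ?thesis by force
qed

lemma poly_root_in_half_open: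
  fixes p :: "real poly"
  assumes "a < b" "poly p a * poly p b \<le> 0" "poly p b \<noteq> 0"
  shows "\<exists>x. a \<le> x \<and> x < b \<and> poly p x = 0"
proof (cases "poly p a = 0")
  case False
  then have "poly p a * poly p b < 0" using assms(2,3) by (simp add: order_less_le)
  then obtain x where "a < x" "x < b" "poly p x = 0" using poly_IVT[OF assms(1)] by blast
  then show ?thesis by (intro exI[of _ x]) auto
qed (use assms(1) in auto)

lemma poly_roots_eq_if_card_ge:
  fixes p :: "'a::idom poly"
  assumes "p \<noteq> 0" "finite S" "S \<subseteq> {x. poly p x = 0}" "degree p \<le> card S"
  shows "S = {x. poly p x = 0}"
proof -
  have "finite {x. poly p x = 0}" using poly_roots_finite[OF assms(1)] .
  moreover have "card {x. poly p x = 0} \<le> card S"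
    using card_poly_roots_bound[OF assms(1)] assms(4) by simp
  ultimately show ?thesis using assms(3) by (simp add: card_seteq)
qed

lemma cot_le_inverse:
  assumes "0 < v" "v < pi / 2"
  shows "cot v \<le> 1 / v"
proof -
  have "v \<le> tan v" using abs_tan_ge[of v] tan_pos_pi2_le[of v] assms by simp
  then show ?thesis using assms(1) by (simp add: cot_altdef inverse_eq_divide frac_le)
qed

lemma one_minus_cos_le: "1 - cos d \<le> (d::real)\<^sup>2 / 2"
proof -
  have "\<bar>sin (d / 2)\<bar> \<le> \<bar>d / 2\<bar>" by (rule abs_sin_x_le_abs_x)
  then have "sin (d / 2) ^ 2 \<le> (d / 2) ^ 2" by (metis power2_abs power_mono abs_ge_zero)
  then show ?thesis using cos_double_sin[of "d / 2"] by (simp add: power2_eq_square field_simps)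
qed

lemma cos_diff_cos_add_le:
  fixes t d :: real
  assumes "0 \<le> d" "0 \<le> cos t" "0 \<le> sin t"
  shows "cos t - cos (t + d) \<le> cos t * d\<^sup>2 / 2 + sin t * d"
proof -
  have "cos t - cos (t + d) = cos t * (1 - cos d) + sin t * sin d"
    unfolding cos_add by (simp add: algebra_simps)
  also have "\<dots> \<le> cos t * (d\<^sup>2 / 2) + sin t * d"
    using one_minus_cos_le[of d] sin_x_le_x[OF assms(1)] assms(2,3)
    by (intro add_mono mult_left_mono) auto
  finally show ?thesis by simp
qed

section \<open>Chebyshev polynomials at cos t\<close>

lemma cheb_T_cos: "poly (cheb_T m) (cos t) = cos (real m * t)"
proof (induction m rule: cheb_T.induct)
  case (3 m)
  have "cos (real (Suc (Suc m)) * t) + cos (real m * t) = 2 * cos t * cos (real (Suc m) * t)"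
    using cos_add[of "real (Suc m) * t" t] cos_diff[of "real (Suc m) * t" t]
    by (simp add: algebra_simps)
  with 3 show ?case by simp
qed simp_all

lemma cheb_U_cos: "poly (cheb_U m) (cos t) * sin t = sin (real (Suc m) * t)"
proof (induction m rule: cheb_U.induct)
  case 2
  show ?case by (simp add: sin_double)
next
  case (3 m)
  have "sin (real (Suc (Suc (Suc m))) * t) + sin (real (Suc m) * t)
      = 2 * cos t * sin (real (Suc (Suc m)) * t)"
    using sin_add[of "real (Suc (Suc m)) * t" t] sin_diff[of "real (Suc (Suc m)) * t" t]
    by (simp add: algebra_simps)
  with 3 show ?case by (simp add: algebra_simps)
qed simp

lemma degree_cheb_U_le: "degree (cheb_U m) \<le> m"
proof (induction m rule: cheb_U.induct)
  case (3 m)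
  have "degree ([:0, 2:] * cheb_U (Suc m)) \<le> Suc (Suc m)"
    using degree_mult_le[of "[:0, 2:]" "cheb_U (Suc m)"] 3 by simp
  with 3 show ?case by (simp add: degree_diff_le)
qed auto

definition dU_trig :: "real \<Rightarrow> real \<Rightarrow> real" where
  "dU_trig w t = cos t * sin (w * t) - w * cos (w * t) * sin t"

definition R_trig :: "real \<Rightarrow> real \<Rightarrow> real" where
  "R_trig w t = w * cos (w * t) * cos t + sin (w * t) * sin t"

lemma pderiv_cheb_U_cos:
  "sin t ^ 3 * poly (pderiv (cheb_U m)) (cos t) = dU_trig (real (Suc m)) t"
proof -
  let ?w = "real (Suc m)"
  have "((\<lambda>t. poly (cheb_U m) (cos t) * sin t) has_real_derivative
      poly (pderiv (cheb_U m)) (cos t) * (- sin t) * sin t + poly (cheb_U m) (cos t) * cos t) (at t)"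
    by (auto intro!: derivative_eq_intros DERIV_chain2[OF poly_DERIV])
  moreover have "((\<lambda>t. sin (?w * t)) has_real_derivative ?w * cos (?w * t)) (at t)"
    by (auto intro!: derivative_eq_intros)
  ultimately have d: "poly (pderiv (cheb_U m)) (cos t) * (- sin t) * sin t
      + poly (cheb_U m) (cos t) * cos t = ?w * cos (?w * t)"
    unfolding cheb_U_cos by (rule DERIV_unique)
  have "sin t ^ 3 * poly (pderiv (cheb_U m)) (cos t) = cos t * (poly (cheb_U m) (cos t) * sin t)
      - sin t * (poly (pderiv (cheb_U m)) (cos t) * (- sin t) * sin t + poly (cheb_U m) (cos t) * cos t)"
    by (simp add: algebra_simps power3_eq_cube)
  also have "\<dots> = dU_trig ?w t"
    unfolding d cheb_U_cos dU_trig_def by (simp add: algebra_simps)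
  finally show ?thesis .
qed

lemma cheb_T_combination_cos:
  assumes "m \<ge> 1"
  shows "poly (smult (real m - 1) (cheb_T (m + 1)) + smult (real m + 1) (cheb_T (m - 1))) (cos t)
       = 2 * R_trig (real m) t"
proof -
  have plus: "cos (real (m + 1) * t) = cos (real m * t) * cos t - sin (real m * t) * sin t"
    using cos_add[of "real m * t" t] by (simp add: algebra_simps)
  have minus: "cos (real (m - 1) * t) = cos (real m * t) * cos t + sin (real m * t) * sin t"
    using cos_diff[of "real m * t" t] assms by (simp add: algebra_simps of_nat_diff)
  show ?thesis
    unfolding poly_add poly_smult cheb_T_cos plus minus R_trig_def by (simp add: algebra_simps)
qed

lemma pderiv_cheb_U_odd_cos:
  assumes "n \<ge> 1"
  shows "sin t ^ 3 * poly (pderiv (cheb_U (2 * n - 1))) (cos t) = dU_trig (2 * real n) t"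
  using pderiv_cheb_U_cos[of t "2 * n - 1"] assms by (simp add: of_nat_diff)

section \<open>The roots of U'_{2n-1}\<close>

lemma dU_trig_grid:
  assumes "w \<noteq> 0"
  shows "dU_trig w (real j * pi / w) = - w * (-1) ^ j * sin (real j * pi / w)"
proof -
  have "w * (real j * pi / w) = real j * pi" using assms by simp
  then show ?thesis unfolding dU_trig_def by simp
qed

lemma dU_trig_root_between_grid:
  assumes "0 < w" "1 \<le> j" "real (Suc j) < w"
  shows "\<exists>\<theta>. real j * pi / w < \<theta> \<and> \<theta> < real (Suc j) * pi / w \<and> dU_trig w \<theta> = 0"
proof (rule continuous_sign_change_root)
  show "continuous_on {real j * pi / w..real (Suc j) * pi / w} (dU_trig w)"
    unfolding dU_trig_def by (intro continuous_intros)
  show "real j * pi / w \<le> real (Suc j) * pi / w"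
    using assms(1) by (simp add: divide_right_mono)
  have sin_pos: "0 < sin (real i * pi / w)" if "1 \<le> i" "i \<le> Suc j" for i
  proof (rule sin_gt_zero)
    show "0 < real i * pi / w" using that(1) assms(1) by simp
    have "real i < w" using that(2) assms(3) by linarith
    then show "real i * pi / w < pi" using assms(1) by (simp add: field_simps)
  qed
  have "dU_trig w (real j * pi / w) * dU_trig w (real (Suc j) * pi / w)
      = - (w\<^sup>2 * sin (real j * pi / w) * sin (real (Suc j) * pi / w))"
    unfolding dU_trig_grid[OF less_imp_neq[OF assms(1), symmetric]]
    by (simp add: power2_eq_square algebra_simps)
  also have "\<dots> < 0" using sin_pos[of j] sin_pos[of "Suc j"] assms by simp
  finally show "dU_trig w (real j * pi / w) * dU_trig w (real (Suc j) * pi / w) < 0" .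
qed

lemma pderiv_cheb_U_nonzero:
  assumes "1 \<le> m"
  shows "pderiv (cheb_U m) \<noteq> 0"
proof
  assume "pderiv (cheb_U m) = 0"
  then have "dU_trig (real (Suc m)) (pi / real (Suc m)) = 0"
    using pderiv_cheb_U_cos[of "pi / real (Suc m)" m] by simp
  moreover have "0 < sin (pi / real (Suc m))"
    using assms by (intro sin_gt_zero) (auto simp: field_simps)
  ultimately show False using dU_trig_grid[of "real (Suc m)" 1] by simp
qed

definition angle_grid :: "nat \<Rightarrow> nat \<Rightarrow> real" where
  "angle_grid n j = real j * pi / (2 * real n)"

lemma angle_grid_mono: "i \<le> j \<Longrightarrow> angle_grid n i \<le> angle_grid n j"
  unfolding angle_grid_def by (simp add: divide_right_mono)

lemma angle_grid_nonneg: "0 \<le> angle_grid n j"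
  unfolding angle_grid_def by simp

lemma angle_grid_le_pi: "j \<le> 2 * n \<Longrightarrow> angle_grid n j \<le> pi"
  unfolding angle_grid_def by (cases "n = 0") (simp_all add: field_simps)

lemma dU_trig_root_angles:
  fixes n :: nat
  assumes "1 \<le> n"
  obtains \<theta> :: "nat \<Rightarrow> real" where
    "\<And>j. j \<in> {1..2*n-2} \<Longrightarrow> angle_grid n j < \<theta> j \<and> \<theta> j < angle_grid n (Suc j)
       \<and> dU_trig (2 * real n) (\<theta> j) = 0"
    "strict_mono_on {1..2*n-2} \<theta>"
proof -
  let ?J = "{1..2*n-2}"
  have "\<exists>t. angle_grid n j < t \<and> t < angle_grid n (Suc j) \<and> dU_trig (2 * real n) t = 0"
    if "j \<in> ?J" for j
  proof -
    have "real (Suc j) < 2 * real n" using that assms by auto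
    then show ?thesis
      using dU_trig_root_between_grid[of "2 * real n" j] that unfolding angle_grid_def by auto
  qed
  then obtain \<theta> where \<theta>: "\<And>j. j \<in> ?J \<Longrightarrow> angle_grid n j < \<theta> j \<and> \<theta> j < angle_grid n (Suc j)
      \<and> dU_trig (2 * real n) (\<theta> j) = 0"
    by metis
  moreover have "strict_mono_on ?J \<theta>"
  proof (rule strict_mono_onI)
    fix i j assume "i \<in> ?J" "j \<in> ?J" "i < j"
    then have "angle_grid n (Suc i) \<le> angle_grid n j" using angle_grid_mono by simp
    then show "\<theta> i < \<theta> j" using \<theta>[OF \<open>i \<in> ?J\<close>] \<theta>[OF \<open>j \<in> ?J\<close>] by linarith
  qed
  ultimately show ?thesis using that by blast
qed

lemma pderiv_cheb_U_roots_eq_cos_angles: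
  fixes n :: nat
  assumes "2 \<le> n"
    and \<theta>: "\<And>j. j \<in> {1..2*n-2} \<Longrightarrow> angle_grid n j < \<theta> j \<and> \<theta> j < angle_grid n (Suc j)
      \<and> dU_trig (2 * real n) (\<theta> j) = 0"
    and mono: "strict_mono_on {1..2*n-2} \<theta>"
  shows "{x. poly (pderiv (cheb_U (2*n-1))) x = 0} = (\<lambda>j. cos (\<theta> j)) ` {1..2*n-2}"
proof -
  let ?J = "{1..2*n-2}" and ?p = "pderiv (cheb_U (2*n-1))"
  have \<theta>_range: "0 < \<theta> j \<and> \<theta> j < pi" if "j \<in> ?J" for j
  proof -
    have "Suc j \<le> 2 * n" using that by auto
    then show ?thesis using \<theta>[OF that] angle_grid_nonneg[of n j] angle_grid_le_pi[of "Suc j" n] by auto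
  qed
  have "inj_on (\<lambda>j. cos (\<theta> j)) ?J"
  proof (rule linorder_inj_onI)
    fix i j assume "i < j" "i \<in> ?J" "j \<in> ?J"
    then show "cos (\<theta> i) \<noteq> cos (\<theta> j)"
      using cos_monotone_0_pi[of "\<theta> i" "\<theta> j"] strict_mono_onD[OF mono]
        \<theta>_range[OF \<open>i \<in> ?J\<close>] \<theta>_range[OF \<open>j \<in> ?J\<close>] by force
  qed auto
  then have "card ((\<lambda>j. cos (\<theta> j)) ` ?J) = 2 * n - 2" by (simp add: card_image)
  moreover have "degree ?p \<le> 2 * n - 2"
    using degree_cheb_U_le[of "2 * n - 1"] by (simp add: degree_pderiv)
  moreover have "poly ?p (cos t) = 0" if "dU_trig (2 * real n) t = 0" "0 < t" "t < pi" for t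
    using pderiv_cheb_U_odd_cos[of n t] sin_gt_zero[of t] that assms by auto
  then have "(\<lambda>j. cos (\<theta> j)) ` ?J \<subseteq> {x. poly ?p x = 0}"
    using \<theta> \<theta>_range by auto
  ultimately have "(\<lambda>j. cos (\<theta> j)) ` ?J = {x. poly ?p x = 0}"
    using pderiv_cheb_U_nonzero[of "2 * n - 1"] assms(1) by (intro poly_roots_eq_if_card_ge) auto
  then show ?thesis by simp
qed

lemma pderiv_cheb_U_nonsmallest_root_angle:
  fixes n :: nat
  assumes "2 \<le> n" "0 < \<eta>" "\<eta> < \<zeta>"
    and "poly (pderiv (cheb_U (2*n-1))) \<eta> = 0" "poly (pderiv (cheb_U (2*n-1))) \<zeta> = 0"
  obtains \<theta> where "pi / (2 * real n) < \<theta>" "\<theta> < pi / 2 - pi / (2 * real n)"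
    "cos \<theta> = \<zeta>" "dU_trig (2 * real n) \<theta> = 0"
proof -
  let ?J = "{1..2*n-2}"
  obtain \<theta> where \<theta>: "\<And>j. j \<in> ?J \<Longrightarrow> angle_grid n j < \<theta> j \<and> \<theta> j < angle_grid n (Suc j)
      \<and> dU_trig (2 * real n) (\<theta> j) = 0"
    and mono: "strict_mono_on ?J \<theta>"
    using dU_trig_root_angles[of n] assms(1) by auto
  obtain j k where j: "j \<in> ?J" "\<zeta> = cos (\<theta> j)" and k: "k \<in> ?J" "\<eta> = cos (\<theta> k)"
    using assms(4,5) pderiv_cheb_U_roots_eq_cos_angles[OF assms(1) \<theta> mono] by blast
  have \<theta>_range: "0 \<le> \<theta> i \<and> \<theta> i \<le> pi" if "i \<in> ?J" for i
  proof -
    have "Suc i \<le> 2 * n" using that by auto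
    then show ?thesis using \<theta>[OF that] angle_grid_nonneg[of n i] angle_grid_le_pi[of "Suc i" n] by auto
  qed
  have "\<theta> k < pi / 2"
  proof (rule ccontr)
    assume "\<not> \<theta> k < pi / 2"
    then have "cos (\<theta> k) \<le> cos (pi / 2)"
      using cos_monotone_0_pi_le[of "pi / 2" "\<theta> k"] \<theta>_range[OF k(1)] by linarith
    then show False using k(2) assms(2) by simp
  qed
  moreover have "angle_grid n n = pi / 2" unfolding angle_grid_def using assms(1) by simp
  ultimately have "angle_grid n k < angle_grid n n" using \<theta>[OF k(1)] by linarith
  then have "k < n" using angle_grid_mono[of n k] by (meson not_le)
  have "\<theta> j < \<theta> k"
  proof (rule ccontr)
    assume "\<not> \<theta> j < \<theta> k"
    then have "cos (\<theta> j) \<le> cos (\<theta> k)"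
      using cos_monotone_0_pi_le \<theta>_range[OF j(1)] \<theta>_range[OF k(1)] by simp
    then show False using j(2) k(2) assms(3) by simp
  qed
  then have "Suc j \<le> n - 1" using strict_mono_on_less[OF mono j(1) k(1)] \<open>k < n\<close> by simp
  then have "\<theta> j < angle_grid n (n - 1)" using \<theta>[OF j(1)] angle_grid_mono[of "Suc j" "n - 1" n] by linarith
  moreover have "angle_grid n (n - 1) = pi / 2 - pi / (2 * real n)"
    unfolding angle_grid_def using assms(1) by (simp add: of_nat_diff field_simps)
  moreover have "angle_grid n 1 \<le> angle_grid n j" using angle_grid_mono j(1) by simp
  moreover have "angle_grid n 1 = pi / (2 * real n)" unfolding angle_grid_def by simp
  ultimately have "pi / (2 * real n) < \<theta> j" "\<theta> j < pi / 2 - pi / (2 * real n)"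
    using \<theta>[OF j(1)] by linarith+
  then show ?thesis using that \<theta>[OF j(1)] j(2) by blast
qed

section \<open>A sign change of R next to each root\<close>

lemma R_trig_mult_sin_at_dU_root:
  assumes "dU_trig w t = 0"
  shows "R_trig w t * sin t = sin (w * t)"
proof -
  have root: "w * cos (w * t) * sin t = cos t * sin (w * t)" using assms unfolding dU_trig_def by simp
  have "R_trig w t * sin t = cos t * (w * cos (w * t) * sin t) + sin (w * t) * sin t ^ 2"
    unfolding R_trig_def by (simp add: power2_eq_square algebra_simps)
  also have "\<dots> = sin (w * t) * (sin t ^ 2 + cos t ^ 2)"
    unfolding root power2_eq_square by algebra
  finally show ?thesis by simp
qed

lemma sin_mult_at_dU_root_nonzero:
  assumes "w \<noteq> 0" "sin t \<noteq> 0" "dU_trig w t = 0"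
  shows "sin (w * t) \<noteq> 0"
proof
  assume "sin (w * t) = 0"
  then have "cos (w * t) = 0" using assms unfolding dU_trig_def by simp
  with \<open>sin (w * t) = 0\<close> show False using sin_cos_squared_add[of "w * t"] by simp
qed

(* With phi = w t we have R_trig w t = sin phi cos t (w cot phi + tan t), and at a root t0 of
   dU_trig, cot phi = cot t0 / w. Advancing phi by arctan (cot t0 / w) + arctan k carries it past
   the next odd multiple of pi/2 to where w cot phi = - w k <= - tan t1, without changing the
   sign of sin phi. *)
lemma R_trig_sign_change:
  assumes "0 < w" "0 < sin t0" "dU_trig w t0 = 0" "0 \<le> k" "sin t1 \<le> w * k * cos t1"
    and t1: "t1 = t0 + (arctan (cot t0 / w) + arctan k) / w"
  shows "R_trig w t0 * R_trig w t1 \<le> 0"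
proof -
  define S C q where "S = sin (w * t0)" and "C = cos (w * t0)" and "q = cot t0 / w"
  have "S \<noteq> 0" unfolding S_def using sin_mult_at_dU_root_nonzero assms(1-3) by simp
  have "cos t0 * S = w * C * sin t0" using assms(3) unfolding dU_trig_def S_def C_def by simp
  then have C: "C = q * S" unfolding q_def cot_def using assms(1,2) by (simp add: field_simps)
  have "S * R_trig w t0 * sin t0 = S\<^sup>2"
    using R_trig_mult_sin_at_dU_root[OF assms(3)] unfolding S_def by (simp add: power2_eq_square)
  then have "0 < S * R_trig w t0 * sin t0" using \<open>S \<noteq> 0\<close> by simp
  then have pos: "0 < S * R_trig w t0" using assms(2) by (rule zero_less_mult_pos2)
  have sin_arctan: "sin (arctan x) = x * cos (arctan x)" for x
    using cos_arctan_not_zero[of x] tan_arctan[of x] unfolding tan_def by (simp add: field_simps)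
  have phase: "w * t1 = w * t0 + (arctan q + arctan k)"
    unfolding t1 q_def using assms(1) by (simp add: field_simps)
  have "S * R_trig w t1
      = S\<^sup>2 * cos (arctan q) * cos (arctan k) * (1 + q\<^sup>2) * (sin t1 - w * k * cos t1)"
    unfolding R_trig_def phase sin_add cos_add sin_arctan S_def[symmetric] C_def[symmetric] C power2_eq_square
    by algebra
  also have "\<dots> \<le> 0"
    using assms(5) by (intro mult_nonneg_nonpos) (auto simp: cos_arctan)
  finally have "(S * R_trig w t0) * (S * R_trig w t1) \<le> 0"
    using pos by (simp add: mult_nonneg_nonpos)
  then have "S\<^sup>2 * (R_trig w t0 * R_trig w t1) \<le> 0" by (simp add: power2_eq_square algebra_simps)
  then show ?thesis using \<open>S \<noteq> 0\<close> by (simp add: mult_le_0_iff)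
qed

locale interior_angle =
  fixes n t0 :: real
  assumes n_ge: "100 \<le> n"
    and t0_gt: "pi / (2 * n) < t0" and t0_lt: "t0 < pi / 2 - pi / (2 * n)"
begin

(* step is the increment of R_trig_sign_change for w = 2n and k = tan_max / (2n); the a priori
   bound step <= max_step is what gives tan (t0 + step) <= tan_max, as that lemma requires. *)
definition cot_ratio :: real where "cot_ratio = cot t0 / (2 * n)"
definition max_step :: real where "max_step = 2 / (5 * n)"
definition gap :: real where "gap = pi / 2 - t0 - max_step"
definition tan_max :: real where "tan_max = tan (t0 + max_step)"
definition step :: real where "step = (arctan cot_ratio + arctan (tan_max / (2 * n))) / (2 * n)"

lemma n_pos: "0 < n"
  using n_ge by simp

lemma t0_range: "0 < t0" "t0 < pi / 2"
proof -
  have "0 < pi / (2 * n)" using n_pos by simp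
  then show "0 < t0" "t0 < pi / 2" using t0_gt t0_lt by linarith+
qed

lemma cos_t0_pos: "0 < cos t0"
  using t0_range by (simp add: cos_gt_zero_pi)

lemma sin_t0_pos: "0 < sin t0"
  using t0_range by (simp add: sin_gt_zero)

lemma cot_ratio_pos: "0 < cot_ratio"
  unfolding cot_ratio_def using cot_gt_zero[OF t0_range] n_pos by simp

lemma cot_ratio_lt: "cot_ratio < 1 / 3"
proof -
  have "cot t0 \<le> 1 / t0" using cot_le_inverse[OF t0_range] .
  also have "\<dots> < 2 * n / pi" using t0_gt t0_range n_pos by (simp add: field_simps)
  also have "\<dots> < 2 * n / 3" using pi_gt3 n_pos by (intro divide_strict_left_mono) auto
  finally show ?thesis unfolding cot_ratio_def using n_pos by (simp add: field_simps)
qed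

lemma sin_t0_mult_cot_ratio: "2 * n * sin t0 * cot_ratio = cos t0"
  unfolding cot_ratio_def cot_def using n_pos sin_t0_pos by (simp add: field_simps)

lemma max_step_pos: "0 < max_step"
  unfolding max_step_def using n_pos by simp

lemma gap_gt: "11 / (10 * n) < gap"
proof -
  have "11 / (10 * n) < pi / (2 * n) - max_step"
    unfolding max_step_def using pi_gt3 n_pos by (simp add: field_simps)
  then show ?thesis unfolding gap_def using t0_lt by linarith
qed

lemma gap_range: "0 < gap" "gap < pi / 2"
proof -
  have "0 < 11 / (10 * n)" using n_pos by simp
  then show "0 < gap" "gap < pi / 2"
    using gap_gt t0_range max_step_pos unfolding gap_def by linarith+
qed

lemma tan_max_eq_cot_gap: "tan_max = cot gap"
  unfolding tan_max_def gap_def using tan_cot'[of "pi / 2 - t0 - max_step"] by simp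

lemma tan_max_pos: "0 < tan_max"
  unfolding tan_max_eq_cot_gap using cot_gt_zero[OF gap_range] .

lemma tan_max_lt: "tan_max < 10 * n / 11"
proof -
  have "tan_max \<le> 1 / gap" unfolding tan_max_eq_cot_gap using cot_le_inverse[OF gap_range] .
  also have "\<dots> < 10 * n / 11" using gap_gt gap_range n_pos by (simp add: field_simps)
  finally show ?thesis .
qed

lemma max_step_mult_tan_max: "max_step * tan_max < 4 / 11"
  using mult_strict_left_mono[OF tan_max_lt max_step_pos] n_pos unfolding max_step_def by simp

lemma step_pos: "0 < step"
  unfolding step_def using cot_ratio_pos tan_max_pos n_pos by (intro divide_pos_pos add_pos_pos) auto

lemma double_n_mult_step_le: "2 * n * step \<le> cot_ratio + tan_max / (2 * n)"
  unfolding step_def using arctan_le_self cot_ratio_pos tan_max_pos n_pos by (auto intro!: add_mono)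

lemma step_le_max_step: "step \<le> max_step"
proof -
  have "tan_max / (2 * n) < 5 / 11" using tan_max_lt n_pos by (simp add: field_simps)
  then have "2 * n * step \<le> 4 / 5" using double_n_mult_step_le cot_ratio_lt by linarith
  then show ?thesis unfolding max_step_def using n_pos by (simp add: field_simps)
qed

lemma t0_plus_step_lt: "t0 + step < pi / 2"
  using step_le_max_step gap_range unfolding gap_def by simp

lemma sin_le_tan_max_mult_cos: "sin (t0 + step) \<le> tan_max * cos (t0 + step)"
proof -
  have "0 < cos (t0 + step)"
    using t0_range step_pos t0_plus_step_lt by (intro cos_gt_zero_pi) auto
  moreover have "tan (t0 + step) \<le> tan_max"
    unfolding tan_max_def using t0_range step_pos step_le_max_step gap_range
    unfolding gap_def by (intro tan_mono_le) auto
  ultimately show ?thesis unfolding tan_def by (simp add: divide_le_eq)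
qed

lemma cos_t0_mult_tan_max: "cos t0 * tan_max \<le> 15 / 11"
proof -
  have sin_gap: "0 < sin gap" and cos_gap: "0 < cos gap"
    using gap_range by (auto intro: sin_gt_zero cos_gt_zero_pi)
  have "cos t0 = sin (gap + max_step)" unfolding gap_def by (simp add: cos_sin_eq)
  also have "\<dots> \<le> sin gap + cos gap * max_step"
    unfolding sin_add using sin_gap cos_gap sin_x_le_x[of max_step] max_step_pos
    by (intro add_mono mult_left_mono) auto
  finally have "cos t0 * tan_max \<le> (sin gap + cos gap * max_step) * tan_max"
    using tan_max_pos by (intro mult_right_mono) auto
  also have "\<dots> = cos gap * (1 + max_step * tan_max)"
    unfolding tan_max_eq_cot_gap cot_def using sin_gap by (simp add: field_simps)
  also have "\<dots> \<le> 1 * (15 / 11)"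
    using max_step_mult_tan_max max_step_pos tan_max_pos cos_gap by (intro mult_mono) auto
  finally show ?thesis by simp
qed

lemma cos_t0_mult_step_le: "2 * n * cos t0 * step \<le> 1 / 3 + 15 / 2200"
proof -
  have "cos t0 * cot_ratio \<le> 1 * (1 / 3)"
    using cos_t0_pos cot_ratio_pos cot_ratio_lt by (intro mult_mono) auto
  moreover have "cos t0 * (tan_max / (2 * n)) \<le> 15 / 2200"
    using cos_t0_mult_tan_max n_ge n_pos by (simp add: field_simps)
  moreover have "cos t0 * (2 * n * step) \<le> cos t0 * (cot_ratio + tan_max / (2 * n))"
    using double_n_mult_step_le cos_t0_pos by (intro mult_left_mono) auto
  ultimately show ?thesis by (simp add: algebra_simps)
qed

lemma cos_t0_mult_sin_t0_step_le: "cos t0 * (4 * n\<^sup>2 * sin t0 * step) \<le> 1 + 225 / 484"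
proof -
  define c s where "c = cos t0" and "s = sin t0"
  have "2 * n * s * (2 * n * step) \<le> 2 * n * s * (cot_ratio + tan_max / (2 * n))"
    using double_n_mult_step_le n_pos sin_t0_pos unfolding s_def by (intro mult_left_mono) auto
  also have "\<dots> = c + s * tan_max"
    using sin_t0_mult_cot_ratio n_pos unfolding c_def s_def by (simp add: field_simps)
  finally have "c * (4 * n\<^sup>2 * s * step) \<le> c * (c + s * tan_max)"
    using cos_t0_pos unfolding c_def by (intro mult_left_mono) (auto simp: power2_eq_square algebra_simps)
  also have "\<dots> = 1 - s\<^sup>2 + s * (c * tan_max)"
    unfolding c_def s_def by (simp add: cos_squared_eq power2_eq_square algebra_simps)
  also have "\<dots> \<le> 1 - s\<^sup>2 + s * (15 / 11)"
    using cos_t0_mult_tan_max sin_t0_pos unfolding c_def s_def by (intro add_left_mono mult_left_mono) auto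
  also have "\<dots> \<le> 1 + 225 / 484"
    using zero_le_power2[of "s - 15 / 22"] by (simp add: power2_eq_square algebra_simps)
  finally show ?thesis unfolding c_def s_def .
qed

lemma cos_step_bound: "cos t0 - cos (t0 + step) \<le> 2 / (5 * n\<^sup>2 * cos t0)"
proof -
  have "(2 * n * cos t0 * step)\<^sup>2 \<le> (1 / 3 + 15 / 2200)\<^sup>2"
    using cos_t0_mult_step_le cos_t0_pos step_pos n_pos by (intro power_mono) auto
  moreover have "(1 / 3 + 15 / 2200 :: real)\<^sup>2 \<le> 3 / 25" by (simp add: power2_eq_square)
  moreover have "4 * n\<^sup>2 * cos t0 * (cos t0 * step\<^sup>2 / 2 + sin t0 * step)
      = (2 * n * cos t0 * step)\<^sup>2 / 2 + cos t0 * (4 * n\<^sup>2 * sin t0 * step)"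
    by (simp add: power2_eq_square algebra_simps)
  ultimately have "4 * n\<^sup>2 * cos t0 * (cos t0 * step\<^sup>2 / 2 + sin t0 * step) \<le> 8 / 5"
    using cos_t0_mult_sin_t0_step_le by linarith
  then have "cos t0 * step\<^sup>2 / 2 + sin t0 * step \<le> 2 / (5 * n\<^sup>2 * cos t0)"
    using cos_t0_pos n_pos by (simp add: field_simps)
  then show ?thesis
    using cos_diff_cos_add_le[of step t0] step_pos cos_t0_pos sin_t0_pos by simp
qed

lemma R_trig_nonzero:
  assumes "dU_trig (2 * n) t0 = 0"
  shows "R_trig (2 * n) t0 \<noteq> 0"
  using R_trig_mult_sin_at_dU_root[OF assms] sin_mult_at_dU_root_nonzero[OF _ _ assms]
    n_pos sin_t0_pos by auto

lemma R_trig_sign_change_over_step: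
  assumes "dU_trig (2 * n) t0 = 0"
  shows "R_trig (2 * n) t0 * R_trig (2 * n) (t0 + step) \<le> 0"
proof (rule R_trig_sign_change[OF _ sin_t0_pos assms])
  show "sin (t0 + step) \<le> 2 * n * (tan_max / (2 * n)) * cos (t0 + step)"
    using sin_le_tan_max_mult_cos n_pos by simp
qed (use n_pos tan_max_pos in \<open>auto simp: step_def cot_ratio_def\<close>)

end

theorem mainTheorem5:
  "\<exists>N::nat. \<forall>n\<ge>N.
     \<forall>\<zeta>::real.
       (\<zeta> > 0 \<and> poly (pderiv (cheb_U (2*n - 1))) \<zeta> = 0 \<and>
        (\<exists>\<eta>. 0 < \<eta> \<and> \<eta> < \<zeta> \<and> poly (pderiv (cheb_U (2*n - 1))) \<eta> = 0))
       \<longrightarrow> (\<exists>x. \<zeta> - 2 / (5 * (real n)^2 * \<zeta>) \<le> x \<and> x < \<zeta> \<and>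
               poly (smult (2 * real n - 1) (cheb_T (2*n + 1)) +
                     smult (2 * real n + 1) (cheb_T (2*n - 1))) x = 0)"
proof (rule exI[of _ 100], intro allI impI, elim conjE exE)
  fix n :: nat and \<zeta> \<eta> :: real
  assume n: "100 \<le> n" and "0 < \<zeta>" "poly (pderiv (cheb_U (2*n - 1))) \<zeta> = 0"
    and "0 < \<eta>" "\<eta> < \<zeta>" "poly (pderiv (cheb_U (2*n - 1))) \<eta> = 0"
  then obtain \<theta> where \<theta>: "pi / (2 * real n) < \<theta>" "\<theta> < pi / 2 - pi / (2 * real n)"
    "cos \<theta> = \<zeta>" "dU_trig (2 * real n) \<theta> = 0"
    using pderiv_cheb_U_nonsmallest_root_angle[of n \<eta> \<zeta>] by auto
  interpret interior_angle "real n" \<theta> using n \<theta> by unfold_locales auto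
  define R where "R = smult (2 * real n - 1) (cheb_T (2*n + 1)) + smult (2 * real n + 1) (cheb_T (2*n - 1))"
  have R_cos: "poly R (cos t) = 2 * R_trig (2 * real n) t" for t
    using cheb_T_combination_cos[of "2 * n" t] n unfolding R_def by simp
  have "cos (\<theta> + step) < \<zeta>"
    using cos_monotone_0_pi[of \<theta> "\<theta> + step"] t0_range step_pos t0_plus_step_lt \<theta>(3) by simp
  then obtain x where x: "cos (\<theta> + step) \<le> x" "x < \<zeta>" "poly R x = 0"
    using poly_root_in_half_open[of "cos (\<theta> + step)" \<zeta> R] R_cos[of \<theta>] R_cos[of "\<theta> + step"] \<theta>(3)
      R_trig_sign_change_over_step[OF \<theta>(4)] R_trig_nonzero[OF \<theta>(4)] by (auto simp: mult_ac)
  moreover have "\<zeta> - 2 / (5 * (real n)\<^sup>2 * \<zeta>) \<le> cos (\<theta> + step)"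
    using cos_step_bound \<theta>(3) by simp
  ultimately show "\<exists>x. \<zeta> - 2 / (5 * (real n)^2 * \<zeta>) \<le> x \<and> x < \<zeta> \<and>
      poly (smult (2 * real n - 1) (cheb_T (2*n + 1)) + smult (2 * real n + 1) (cheb_T (2*n - 1))) x = 0"
    unfolding R_def by (intro exI[of _ x]) auto
qed

end
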